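(* Let $K\subseteq\mathbb{C}$ be a field containing all roots of unity. Suppose $\{a_1,\dots,a_r\}\subseteq K^{\times}$ is simple in $K$, and $b_1,\dots,b_r$ are elements of an extension field of $K$ such that the multiplicative subgroup $\langle b_1,\dots,b_r\rangle$ contains $\langle a_1,\dots,a_r\rangle$. Then $\{b_1,\dots,b_r\}$ is simple in $K(b_1,\dots,b_r)$.
   Context: For a field $E$, a tuple $\{c_1,\dots,c_k\}\subseteq E^{\times}$ is simple in $E$ if it is multiplicatively independent ($c_1^{n_1}\cdots c_k^{n_k}=1$ with $n_i\in\mathbb{Z}$ only if all $n_i=0$) and the subgroup $\langle c_1,\dots,c_k\rangle$ is pure in $E^{\times}$ (whenever $x^n=c$, $c\in\langle c_1,\dots,c_k\rangle$, $n\ge1$, has a solution in $E^\times$, it has one in $\langle c_1,\dots,c_k\rangle$). *)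

theory Defs
  imports Complex_Main
begin

definition subfield_of :: "'a::field set \<Rightarrow> bool" where
  "subfield_of F \<longleftrightarrow> 0 \<in> F \<and> 1 \<in> F \<and>
     (\<forall>x\<in>F. \<forall>y\<in>F. x + y \<in> F \<and> x * y \<in> F) \<and>
     (\<forall>x\<in>F. - x \<in> F \<and> inverse x \<in> F)"

definition adjoin :: "'a::field set \<Rightarrow> (nat \<Rightarrow> 'a) \<Rightarrow> nat \<Rightarrow> 'a set" where
  "adjoin F c r = \<Inter>{E. subfield_of E \<and> F \<subseteq> E \<and> c ` {..<r} \<subseteq> E}"

definition mult_span :: "(nat \<Rightarrow> 'a::field) \<Rightarrow> nat \<Rightarrow> 'a set" where
  "mult_span c r = {\<Prod>i<r. c i powi n i | n :: nat \<Rightarrow> int. True}"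

definition mult_indep :: "(nat \<Rightarrow> 'a::field) \<Rightarrow> nat \<Rightarrow> bool" where
  "mult_indep c r \<longleftrightarrow>
     (\<forall>n :: nat \<Rightarrow> int. (\<Prod>i<r. c i powi n i) = 1 \<longrightarrow> (\<forall>i<r. n i = 0))"

definition pure_in :: "'a::field set \<Rightarrow> 'a set \<Rightarrow> bool" where
  "pure_in H E \<longleftrightarrow>
     (\<forall>h\<in>H. \<forall>m::nat. m \<ge> 1 \<longrightarrow> (\<exists>x\<in>E - {0}. x ^ m = h) \<longrightarrow> (\<exists>y\<in>H. y ^ m = h))"

definition simple_in :: "'a::field set \<Rightarrow> (nat \<Rightarrow> 'a) \<Rightarrow> nat \<Rightarrow> bool" where
  "simple_in E c r \<longleftrightarrow> (\<forall>i<r. c i \<in> E - {0}) \<and> mult_indep c r \<and> pure_in (mult_span c r) E"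

text \<open>K (a subfield of an ambient field) is isomorphic, via a field embedding \<sigma>, to a subfield
of \<complex> that contains all complex roots of unity.\<close>
definition complex_subfield_with_roots_of_unity :: "'a::field set \<Rightarrow> bool" where
  "complex_subfield_with_roots_of_unity K \<longleftrightarrow>
     (\<exists>\<sigma> :: 'a \<Rightarrow> complex. inj_on \<sigma> K \<and> \<sigma> 1 = 1 \<and>
        (\<forall>x\<in>K. \<forall>y\<in>K. \<sigma> (x + y) = \<sigma> x + \<sigma> y \<and> \<sigma> (x * y) = \<sigma> x * \<sigma> y) \<and>
        (\<forall>z::complex. (\<exists>n::nat. n \<ge> 1 \<and> z ^ n = 1) \<longrightarrow> z \<in> \<sigma> ` K))"

end

(*
  Let A and B be the multiplicative groups generated by the a_i and by the b_i.
  Writing each a_j as a product of powers of the b_i gives an integer matrix, which is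
  nonsingular because the a_j are independent; its adjugate yields D <> 0 with B^D <= A.
  Hence the b_i are independent, B is torsion free, and purity of A in K gives
  K \<inter> B = A.

  For purity of B we adjoin the b_i to A one prime root at a time, keeping a field
  F containing K in which K^* H is root-closed (x in F^*, x^N in K^* H imply x in K^* H).
  A p-th root \<theta> of an element of H either lies in K^* H already, or lies outside F.
  In the second case X^p - \<theta>^p is irreducible over F, because F contains a primitive
  p-th root of unity \<zeta>, so F[\<theta>] is a field, and comparing coefficients under
  \<theta> |-> \<zeta> \<theta> shows that K^* H<\<theta>> is root-closed in F[\<theta>].
  Finally, if x^m = h in B with x in K(b)^*, then x = k y with k in K^* and y in B,
  so k^m lies in K \<inter> B = A, and purity of A in K provides an m-th root of h in B.
*)

theory Submission
  imports Defs "HOL-Computational_Algebra.Polynomial" "HOL-Library.Set_Algebras"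
    "Jordan_Normal_Form.Determinant"
begin

section \<open>Subfields\<close>

context
  fixes F :: "'a::field set"
  assumes F: "subfield_of F"
begin

lemma subfield_0: "0 \<in> F"
  and subfield_1: "1 \<in> F"
  and subfield_add: "x \<in> F \<Longrightarrow> y \<in> F \<Longrightarrow> x + y \<in> F"
  and subfield_mult: "x \<in> F \<Longrightarrow> y \<in> F \<Longrightarrow> x * y \<in> F"
  and subfield_uminus: "x \<in> F \<Longrightarrow> - x \<in> F"
  and subfield_inverse: "x \<in> F \<Longrightarrow> inverse x \<in> F"
  using F unfolding subfield_of_def by auto

lemma subfield_diff: "x \<in> F \<Longrightarrow> y \<in> F \<Longrightarrow> x - y \<in> F"
  by (metis diff_conv_add_uminus subfield_add subfield_uminus)

lemma subfield_divide: "x \<in> F \<Longrightarrow> y \<in> F \<Longrightarrow> x / y \<in> F"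
  by (metis divide_inverse subfield_inverse subfield_mult)

lemma subfield_power: "x \<in> F \<Longrightarrow> x ^ n \<in> F"
  by (induction n) (auto intro: subfield_1 subfield_mult)

lemma subfield_power_int: "x \<in> F \<Longrightarrow> x powi n \<in> F"
  by (auto simp: power_int_def intro: subfield_power subfield_inverse)

end

lemma power_int_in_subfield_coprime:
  fixes \<theta> :: "'a::field"
  assumes F: "subfield_of F" and p: "prime p" and "\<theta> \<noteq> 0"
    and "\<theta> ^ p \<in> F" and "\<theta> powi m \<in> F" and "\<not> int p dvd m"
  shows "\<theta> \<in> F"
proof -
  have "coprime m (int p)"
    using assms(6) p prime_imp_coprime[of "int p" m] by (simp add: coprime_commute)
  then obtain u v where uv: "u * m + v * int p = 1"
    by (metis bezout_int coprime_iff_gcd_eq_1)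
  have "\<theta> = \<theta> powi (u * m + v * int p)"
    by (simp add: uv)
  also have "\<dots> = \<theta> powi (m * u) * \<theta> powi (int p * v)"
    using \<open>\<theta> \<noteq> 0\<close> by (simp add: power_int_add mult.commute)
  also have "\<dots> = (\<theta> powi m) powi u * (\<theta> ^ p) powi v"
    by (simp only: power_int_mult power_int_of_nat)
  finally show ?thesis
    using assms(4,5) by (metis F subfield_mult subfield_power_int)
qed

lemma power_int_div_mod:
  fixes x :: "'a::field"
  assumes "x \<noteq> 0" "p > 0"
  shows "x powi e = (x ^ p) powi (e div int p) * x ^ nat (e mod int p)"
proof -
  have "e = int p * (e div int p) + int (nat (e mod int p))"
    using assms(2) by simp
  then have "x powi e = x powi (int p * (e div int p)) * x powi int (nat (e mod int p))"
    using assms(1) by (metis power_int_add)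
  then show ?thesis
    by (simp only: power_int_mult power_int_of_nat)
qed

lemma prod_lessThan_rotate:
  fixes f :: "nat \<Rightarrow> 'a::comm_monoid_mult"
  assumes "f n = f 0"
  shows "(\<Prod>i<n. f (Suc i)) = (\<Prod>i<n. f i)"
proof (cases n)
  case (Suc m)
  then have "(\<Prod>i<n. f (Suc i)) = (\<Prod>i<m. f (Suc i)) * f n"
    by simp
  also have "\<dots> = f 0 * (\<Prod>i<m. f (Suc i))"
    using assms by (simp add: mult.commute)
  also have "\<dots> = (\<Prod>i<n. f i)"
    using Suc by (simp only: prod.lessThan_Suc_shift)
  finally show ?thesis .
qed simp

section \<open>Multiplicative subgroups\<close>

definition mult_subgroup :: "'a::field set \<Rightarrow> bool" where
  "mult_subgroup H \<longleftrightarrow> 1 \<in> H \<and> 0 \<notin> H \<and> (\<forall>x\<in>H. \<forall>y\<in>H. x * y \<in> H) \<and> (\<forall>x\<in>H. inverse x \<in> H)"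

context
  fixes H :: "'a::field set"
  assumes H: "mult_subgroup H"
begin

lemma mult_subgroup_1: "1 \<in> H"
  and mult_subgroup_nonzero: "x \<in> H \<Longrightarrow> x \<noteq> 0"
  and mult_subgroup_mult: "x \<in> H \<Longrightarrow> y \<in> H \<Longrightarrow> x * y \<in> H"
  and mult_subgroup_inverse: "x \<in> H \<Longrightarrow> inverse x \<in> H"
  using H unfolding mult_subgroup_def by auto

lemma mult_subgroup_divide: "x \<in> H \<Longrightarrow> y \<in> H \<Longrightarrow> x / y \<in> H"
  by (simp add: divide_inverse mult_subgroup_inverse mult_subgroup_mult)

lemma mult_subgroup_power: "x \<in> H \<Longrightarrow> x ^ n \<in> H"
  by (induction n) (auto intro: mult_subgroup_1 mult_subgroup_mult)

lemma mult_subgroup_power_int: "x \<in> H \<Longrightarrow> x powi n \<in> H"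
  by (auto simp: power_int_def intro: mult_subgroup_power mult_subgroup_inverse)

lemma mult_subgroup_times_eq: "T \<subseteq> H \<Longrightarrow> 1 \<in> T \<Longrightarrow> H * T = H"
  by (force simp: set_times_def intro: mult_subgroup_mult)

end

lemma mult_subgroup_times:
  assumes "mult_subgroup H" "mult_subgroup T"
  shows "mult_subgroup (H * T)"
  unfolding mult_subgroup_def
proof (intro conjI ballI)
  show "1 \<in> H * T"
    using set_times_intro[of 1 H 1 T] assms by (simp add: mult_subgroup_1)
  show "0 \<notin> H * T"
    using assms by (auto elim!: set_times_elim dest: mult_subgroup_nonzero)
  fix x y
  assume "x \<in> H * T" "y \<in> H * T"
  then obtain a b a' b' where ab: "a \<in> H" "b \<in> T" "a' \<in> H" "b' \<in> T"
    and "x = a * b" "y = a' * b'"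
    by (auto elim!: set_times_elim)
  then have "x * y = (a * a') * (b * b')" "inverse x = inverse a * inverse b"
    by (simp_all add: ac_simps)
  then show "x * y \<in> H * T" "inverse x \<in> H * T"
    using assms ab by (auto intro!: set_times_intro mult_subgroup_mult mult_subgroup_inverse)
qed

lemma mult_subgroup_range_power_int: "\<theta> \<noteq> 0 \<Longrightarrow> mult_subgroup (range (power_int \<theta>))"
  unfolding mult_subgroup_def
  by (auto simp flip: power_int_add power_int_minus intro!: range_eqI[of _ _ 0])

lemma mult_subgroup_subfield_nonzero: "subfield_of K \<Longrightarrow> mult_subgroup (K - {0})"
  by (auto simp: mult_subgroup_def subfield_1 subfield_mult subfield_inverse)

lemma range_power_int_power_times:
  fixes \<theta> :: "'a::field"
  assumes "\<theta> \<noteq> 0"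
  shows "range (power_int (\<theta> ^ m)) * range (power_int \<theta>) = range (power_int \<theta>)"
proof (intro equalityI subsetI)
  fix x
  assume "x \<in> range (power_int (\<theta> ^ m)) * range (power_int \<theta>)"
  then obtain i j where "x = (\<theta> ^ m) powi i * \<theta> powi j"
    by (auto elim!: set_times_elim)
  also have "\<dots> = \<theta> powi (int m * i + j)"
    using assms by (simp add: power_int_add power_int_mult)
  finally show "x \<in> range (power_int \<theta>)"
    by simp
next
  fix x
  assume "x \<in> range (power_int \<theta>)"
  then obtain j where "x = (\<theta> ^ m) powi 0 * \<theta> powi j"
    by auto
  then show "x \<in> range (power_int (\<theta> ^ m)) * range (power_int \<theta>)"
    by blast
qed

lemma mult_subgroup_times_subset:
  "mult_subgroup E \<Longrightarrow> A \<subseteq> E \<Longrightarrow> B \<subseteq> E \<Longrightarrow> A * B \<subseteq> E"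
  by (auto elim!: set_times_elim intro: mult_subgroup_mult)

lemma one_in_range_power_int: "1 \<in> range (power_int \<theta>)"
  by (rule range_eqI[of _ _ 0]) simp

lemma range_power_int_subset: "mult_subgroup E \<Longrightarrow> \<theta> \<in> E \<Longrightarrow> range (power_int \<theta>) \<subseteq> E"
  by (auto intro: mult_subgroup_power_int)

lemma mult_span_0: "mult_span c 0 = {1}"
  by (simp add: mult_span_def)

lemma mult_spanI: "(\<Prod>i<r. c i powi n i) \<in> mult_span c r"
  by (auto simp: mult_span_def)

lemma mult_span_Suc: "mult_span c (Suc r) = mult_span c r * range (power_int (c r))"
proof (intro equalityI subsetI)
  fix y
  assume "y \<in> mult_span c (Suc r)"
  then obtain n where "y = (\<Prod>i<r. c i powi n i) * c r powi n r"
    by (auto simp: mult_span_def)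
  moreover have "(\<Prod>i<r. c i powi n i) \<in> mult_span c r"
    by (auto simp: mult_span_def)
  ultimately show "y \<in> mult_span c r * range (power_int (c r))"
    by auto
next
  fix y
  assume "y \<in> mult_span c r * range (power_int (c r))"
  then obtain n k where y: "y = (\<Prod>i<r. c i powi n i) * c r powi k"
    by (auto simp: mult_span_def elim!: set_times_elim)
  have "(\<Prod>i<r. c i powi n i) = (\<Prod>i<r. c i powi (n(r := k)) i)"
    by (intro prod.cong) auto
  then have "y = (\<Prod>i<Suc r. c i powi (n(r := k)) i)"
    using y by simp
  then show "y \<in> mult_span c (Suc r)"
    unfolding mult_span_def by blast
qed

lemma mult_subgroup_mult_span: "(\<And>i. i < r \<Longrightarrow> c i \<noteq> 0) \<Longrightarrow> mult_subgroup (mult_span c r)"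
proof (induction r)
  case 0
  then show ?case
    by (simp add: mult_span_0 mult_subgroup_def)
next
  case (Suc r)
  then show ?case
    by (simp add: mult_span_Suc mult_subgroup_times mult_subgroup_range_power_int)
qed

lemma mult_span_subset:
  "mult_subgroup E \<Longrightarrow> (\<And>i. i < r \<Longrightarrow> c i \<in> E) \<Longrightarrow> mult_span c r \<subseteq> E"
  by (induction r)
    (auto simp: mult_span_0 mult_span_Suc set_times_def mult_subgroup_1
      intro: mult_subgroup_mult mult_subgroup_power_int)

lemma mult_span_generator: "j < r \<Longrightarrow> c j \<in> mult_span c r"
proof (induction r)
  case (Suc r)
  have "1 \<in> mult_span c r"
    by (auto simp: mult_span_def intro!: exI[of _ "\<lambda>_. 0"])
  then show ?case
    using Suc unfolding mult_span_Suc less_Suc_eq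
    by (metis power_int_0_right power_int_1_right mult_1_left mult_1_right rangeI set_times_intro)
qed simp

section \<open>Root-closed subgroups\<close>

definition root_closed_in :: "'a::field set \<Rightarrow> 'a set \<Rightarrow> bool" where
  "root_closed_in E S \<longleftrightarrow> (\<forall>x\<in>E - {0}. \<forall>N::nat. N \<ge> 1 \<longrightarrow> x ^ N \<in> S \<longrightarrow> x \<in> S)"

definition kummer_admissible :: "'a::field set \<Rightarrow> 'a set \<Rightarrow> bool" where
  "kummer_admissible K H \<longleftrightarrow>
     (\<exists>F. subfield_of F \<and> K \<subseteq> F \<and> H \<subseteq> F \<and> root_closed_in F ((K - {0}) * H))"

lemma kummer_admissible_subfield:
  assumes K: "subfield_of K" and H: "mult_subgroup H" "H \<subseteq> K"
  shows "kummer_admissible K H"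
proof -
  have "x \<in> (K - {0}) * H" if "x \<in> K - {0}" for x
    using set_times_intro[OF that mult_subgroup_1[OF H(1)]] by simp
  then have "root_closed_in K ((K - {0}) * H)"
    by (simp add: root_closed_in_def)
  then show ?thesis
    using K H(2) by (auto simp: kummer_admissible_def)
qed

section \<open>Polynomials over a subfield\<close>

definition poly_over :: "'a::field set \<Rightarrow> 'a poly \<Rightarrow> bool" where
  "poly_over F f \<longleftrightarrow> (\<forall>i. coeff f i \<in> F)"

context
  fixes F :: "'a::field set"
  assumes F: "subfield_of F"
begin

lemma poly_over_const: "c \<in> F \<Longrightarrow> poly_over F [:c:]"
  by (auto simp: poly_over_def coeff_pCons subfield_0[OF F] split: nat.splits)

lemma poly_over_0: "poly_over F 0"
  using poly_over_const[OF subfield_0[OF F]] by simp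

lemma poly_over_1: "poly_over F 1"
  using poly_over_const[OF subfield_1[OF F]] by (simp add: one_pCons)

lemma poly_over_monom: "c \<in> F \<Longrightarrow> poly_over F (monom c n)"
  by (auto simp: poly_over_def coeff_monom subfield_0[OF F])

lemma poly_over_add: "poly_over F f \<Longrightarrow> poly_over F g \<Longrightarrow> poly_over F (f + g)"
  by (auto simp: poly_over_def subfield_add[OF F])

lemma poly_over_diff: "poly_over F f \<Longrightarrow> poly_over F g \<Longrightarrow> poly_over F (f - g)"
  by (auto simp: poly_over_def subfield_diff[OF F])

lemma poly_over_smult: "c \<in> F \<Longrightarrow> poly_over F f \<Longrightarrow> poly_over F (smult c f)"
  by (auto simp: poly_over_def subfield_mult[OF F])

lemma poly_over_mult: "poly_over F f \<Longrightarrow> poly_over F g \<Longrightarrow> poly_over F (f * g)"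
  unfolding poly_over_def
  by (auto intro: coeff_mult_semiring_closed subfield_0[OF F] subfield_add[OF F] subfield_mult[OF F])

lemma poly_over_power: "poly_over F f \<Longrightarrow> poly_over F (f ^ n)"
  by (induction n) (auto intro: poly_over_1 poly_over_mult)

lemma poly_over_prod: "(\<And>i. i \<in> S \<Longrightarrow> poly_over F (f i)) \<Longrightarrow> poly_over F (prod f S)"
  by (induction S rule: infinite_finite_induct) (auto intro: poly_over_1 poly_over_mult)

lemma poly_over_pcompose_linear: "poly_over F f \<Longrightarrow> \<omega> \<in> F \<Longrightarrow> poly_over F (f \<circ>\<^sub>p [:0, \<omega>:])"
  by (auto simp: poly_over_def coeff_pcompose_linear intro: subfield_mult[OF F] subfield_power[OF F])

lemma poly_over_division_step:
  assumes f: "poly_over F f" "f \<noteq> 0" and q: "poly_over F q" "q \<noteq> 0"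
    and "degree q \<le> degree f"
  shows "\<exists>t. poly_over F t \<and> (f - t * q = 0 \<or> degree (f - t * q) < degree f)"
proof -
  define t where "t = monom (lead_coeff f / lead_coeff q) (degree f - degree q)"
  have "poly_over F t"
    using f q unfolding t_def poly_over_def
    by (auto intro!: subfield_divide[OF F] subfield_0[OF F] simp: coeff_monom)
  moreover have "coeff (f - t * q) n = 0" if "degree f \<le> n" for n
  proof (cases "n = degree f")
    case True
    then show ?thesis
      using \<open>degree q \<le> degree f\<close> q(2) by (simp add: t_def coeff_monom_mult)
  next
    case False
    with that \<open>degree q \<le> degree f\<close> show ?thesis
      by (simp add: t_def coeff_monom_mult coeff_eq_0)
  qed
  then have "degree (f - t * q) < degree f" if "f - t * q \<noteq> 0"
    using that by (intro degree_lessI) auto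
  ultimately show ?thesis
    by blast
qed

lemma poly_over_division:
  assumes q: "poly_over F q" "q \<noteq> 0" and "poly_over F f"
  shows "\<exists>s r. poly_over F s \<and> poly_over F r \<and> f = s * q + r \<and> (r = 0 \<or> degree r < degree q)"
  using \<open>poly_over F f\<close>
proof (induction "degree f" arbitrary: f rule: less_induct)
  case less
  show ?case
  proof (cases "f = 0 \<or> degree f < degree q")
    case True
    then show ?thesis
      using less.prems poly_over_0 by (metis add_0 mult_zero_left)
  next
    case False
    then obtain t where t: "poly_over F t" "f - t * q = 0 \<or> degree (f - t * q) < degree f"
      using poly_over_division_step[OF less.prems _ q] by auto
    moreover have "poly_over F (f - t * q)"
      using less.prems q t by (intro poly_over_diff poly_over_mult)
    ultimately obtain s r where
      "poly_over F s" "poly_over F r" "f - t * q = s * q + r" "r = 0 \<or> degree r < degree q"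
      using less.hyps[of "f - t * q"] poly_over_0 by (metis add_0 mult_zero_left)
    then show ?thesis
      using t by (intro exI[of _ "s + t"] exI[of _ r]) (auto simp: poly_over_add algebra_simps eq_diff_eq)
  qed
qed

end

definition minimal_poly_over :: "'a::field set \<Rightarrow> 'a \<Rightarrow> 'a poly \<Rightarrow> bool" where
  "minimal_poly_over F \<theta> q \<longleftrightarrow> poly_over F q \<and> q \<noteq> 0 \<and> poly q \<theta> = 0 \<and>
     (\<forall>g. poly_over F g \<longrightarrow> poly g \<theta> = 0 \<longrightarrow> degree g < degree q \<longrightarrow> g = 0)"

lemma minimal_poly_over_exists:
  assumes "poly_over F f" "f \<noteq> 0" "poly f \<theta> = 0"
  obtains q where "minimal_poly_over F \<theta> q" "degree q \<le> degree f"
proof -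
  let ?P = "\<lambda>g. poly_over F g \<and> g \<noteq> 0 \<and> poly g \<theta> = 0"
  obtain q where "?P q" and least: "\<And>g. ?P g \<Longrightarrow> degree q \<le> degree g"
    using ex_has_least_nat[of ?P f degree] assms by blast
  then have "minimal_poly_over F \<theta> q"
    unfolding minimal_poly_over_def using not_le by blast
  moreover have "degree q \<le> degree f"
    using least assms by blast
  ultimately show ?thesis
    using that by blast
qed

lemma minimal_poly_over_degree_pos:
  assumes "minimal_poly_over F \<theta> q"
  shows "0 < degree q"
proof (rule ccontr)
  assume "\<not> 0 < degree q"
  then have "poly q \<theta> = lead_coeff q"
    by (simp add: poly_altdef)
  then show False
    using assms by (auto simp: minimal_poly_over_def)
qed

context
  fixes F :: "'a::field set"
  assumes F: "subfield_of F"
begin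

lemma minimal_poly_over_dvd:
  assumes q: "minimal_poly_over F \<theta> q" and f: "poly_over F f" "poly f \<theta> = 0"
  shows "q dvd f"
proof -
  have q': "poly_over F q" "q \<noteq> 0" "poly q \<theta> = 0"
    using q by (auto simp: minimal_poly_over_def)
  obtain s r where sr: "poly_over F r" "f = s * q + r" "r = 0 \<or> degree r < degree q"
    using poly_over_division[OF F q'(1,2) f(1)] by blast
  have "poly r \<theta> = 0"
    using f(2) q'(3) sr(2) by simp
  then have "r = 0"
    using q sr(1,3) by (auto simp: minimal_poly_over_def)
  then show ?thesis
    using sr(2) by simp
qed

lemma minimal_poly_over_degree_1:
  assumes "minimal_poly_over F \<theta> q" "degree q = 1"
  shows "\<theta> \<in> F"
proof -
  have q: "poly_over F q" "poly q \<theta> = 0" "coeff q 1 \<noteq> 0"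
    using assms by (auto simp: minimal_poly_over_def dest: leading_coeff_neq_0)
  then have "\<theta> = - coeff q 0 / coeff q 1"
    using assms(2) by (simp add: poly_altdef field_simps add_eq_0_iff)
  then show ?thesis
    using q(1) unfolding poly_over_def by (metis F subfield_divide subfield_uminus)
qed

text \<open>The polynomial \<open>q(\<omega> X) - \<omega>\<^sup>d q(X)\<close> has degree below \<open>d = deg q\<close> and vanishes at \<open>\<theta>\<close>.\<close>

lemma minimal_poly_over_scale:
  assumes q: "minimal_poly_over F \<theta> q" and \<omega>: "\<omega> \<in> F" "poly q (\<omega> * \<theta>) = 0"
  shows "poly q (\<omega> * x) = \<omega> ^ degree q * poly q x"
proof -
  define d where "d = degree q"
  define g where "g = q \<circ>\<^sub>p [:0, \<omega>:] - smult (\<omega> ^ d) q"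
  have coeff_g: "coeff g i = (\<omega> ^ i - \<omega> ^ d) * coeff q i" for i
    by (simp add: g_def coeff_pcompose_linear algebra_simps)
  have "poly_over F g"
    using q \<omega>(1) unfolding g_def minimal_poly_over_def
    by (intro poly_over_diff poly_over_smult poly_over_pcompose_linear F subfield_power[OF F]) auto
  moreover have "poly g \<theta> = 0"
    using q \<omega>(2) by (simp add: g_def poly_pcompose minimal_poly_over_def mult.commute)
  moreover have "degree g < d" if "g \<noteq> 0"
    using that minimal_poly_over_degree_pos[OF q]
    by (intro degree_lessI) (auto simp: coeff_g d_def dest: le_degree)
  ultimately have "g = 0"
    using q by (auto simp: minimal_poly_over_def d_def)
  then have "q \<circ>\<^sub>p [:0, \<omega>:] = smult (\<omega> ^ d) q"
    by (simp add: g_def)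
  from arg_cong[OF this, of "\<lambda>g. poly g x"] show ?thesis
    by (simp add: poly_pcompose d_def ac_simps)
qed

end

lemma card_le_degree_if_roots:
  fixes f :: "'a::idom poly"
  assumes "f \<noteq> 0" "inj_on g S" "\<And>j. j \<in> S \<Longrightarrow> poly f (g j) = 0"
  shows "card S \<le> degree f"
proof -
  have "card S = card (g ` S)"
    using assms(2) by (simp add: card_image)
  also have "\<dots> \<le> card {x. poly f x = 0}"
    using assms by (intro card_mono poly_roots_finite) auto
  also have "\<dots> \<le> degree f"
    using assms(1) by (rule card_poly_roots_bound)
  finally show ?thesis .
qed

section \<open>Roots of unity\<close>

lemma finite_roots_of_unity:
  fixes n :: nat
  assumes "n \<ge> 1"
  shows "finite {z::'a::field. z ^ n = 1}" and "card {z::'a. z ^ n = 1} \<le> n"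
proof -
  define f :: "'a poly" where "f = monom 1 n + [:-1:]"
  have f: "poly f z = z ^ n - 1" for z
    by (simp add: f_def poly_monom)
  have "degree f = n"
    using assms by (simp add: f_def degree_add_eq_left degree_monom_eq)
  then have "f \<noteq> 0"
    using assms by auto
  moreover have roots: "{z. z ^ n = 1} = {z. poly f z = 0}"
    by (simp add: f)
  ultimately show "finite {z::'a. z ^ n = 1}" "card {z::'a. z ^ n = 1} \<le> n"
    unfolding roots using \<open>degree f = n\<close> poly_roots_finite card_poly_roots_bound by auto
qed

lemma prime_root_of_unity_power_eq_1_iff:
  fixes \<zeta> :: "'a::field"
  assumes p: "prime p" and \<zeta>: "\<zeta> ^ p = 1" "\<zeta> \<noteq> 1"
  shows "\<zeta> ^ n = 1 \<longleftrightarrow> p dvd n"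
proof
  assume "\<zeta> ^ n = 1"
  show "p dvd n"
  proof (rule ccontr)
    assume "\<not> p dvd n"
    then have "n \<noteq> 0" and "gcd n p = 1"
      using p prime_imp_coprime[of p n] by (auto simp: coprime_iff_gcd_eq_1 gcd.commute intro: Nat.gr0I)
    then obtain x y where "n * x = p * y + 1"
      using bezout_nat[of n p] by auto
    then have "\<zeta> ^ (n * x) = \<zeta> ^ (p * y) * \<zeta>"
      by (simp add: power_add)
    then show False
      using \<open>\<zeta> ^ n = 1\<close> \<zeta> by (simp add: power_mult)
  qed
qed (use \<zeta> in \<open>auto simp: power_mult\<close>)

lemma prime_root_of_unity_inj:
  fixes \<zeta> :: "'a::field"
  assumes p: "prime p" and \<zeta>: "\<zeta> ^ p = 1" "\<zeta> \<noteq> 1" and "\<theta> \<noteq> 0"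
  shows "inj_on (\<lambda>j. \<zeta> ^ j * \<theta>) {..<p}"
proof -
  have "i = j" if "i < p" "j < p" "i \<le> j" "\<zeta> ^ i * \<theta> = \<zeta> ^ j * \<theta>" for i j
  proof -
    have "\<zeta> \<noteq> 0"
      using \<zeta>(1) prime_gt_0_nat[OF p] by (metis zero_power zero_neq_one)
    have "\<zeta> ^ i * \<zeta> ^ (j - i) = \<zeta> ^ j"
      using that(3) by (simp flip: power_add)
    also have "\<dots> = \<zeta> ^ i"
      using that(4) \<open>\<theta> \<noteq> 0\<close> by simp
    finally have "\<zeta> ^ (j - i) = 1"
      using \<open>\<zeta> \<noteq> 0\<close> by simp
    then have "p dvd j - i"
      using prime_root_of_unity_power_eq_1_iff[OF p \<zeta>] by simp
    moreover have "j - i < p"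
      using that(2) by linarith
    ultimately have "j - i = 0"
      using nat_dvd_not_less by blast
    then show "i = j"
      using that(3) by simp
  qed
  then show ?thesis
    by (intro inj_onI) (metis lessThan_iff nat_le_linear)
qed

lemma card_roots_of_unity_subfield_ge:
  fixes K :: "'a::field set"
  assumes K: "subfield_of K" and "complex_subfield_with_roots_of_unity K" and n: "n \<ge> 1"
  shows "n \<le> card {x \<in> K. x ^ n = 1}"
proof -
  obtain \<sigma> :: "'a \<Rightarrow> complex" where inj: "inj_on \<sigma> K" and \<sigma>_1: "\<sigma> 1 = 1"
    and \<sigma>_mult: "\<And>x y. x \<in> K \<Longrightarrow> y \<in> K \<Longrightarrow> \<sigma> (x * y) = \<sigma> x * \<sigma> y"
    and onto: "\<And>z::complex. z ^ n = 1 \<Longrightarrow> z \<in> \<sigma> ` K"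
    using assms(2) n unfolding complex_subfield_with_roots_of_unity_def by blast
  have \<sigma>_power: "\<sigma> (x ^ k) = \<sigma> x ^ k" if "x \<in> K" for x k
    using that by (induction k) (auto simp: \<sigma>_1 \<sigma>_mult subfield_power[OF K])
  define R where "R = {x \<in> K. x ^ n = 1}"
  have "finite R"
    using finite_roots_of_unity(1)[OF n] by (rule finite_subset[rotated]) (auto simp: R_def)
  have "{z::complex. z ^ n = 1} \<subseteq> \<sigma> ` R"
  proof
    fix z :: complex
    assume "z \<in> {z. z ^ n = 1}"
    then obtain x where x: "x \<in> K" "\<sigma> x = z" "z ^ n = 1"
      using onto by blast
    then have "\<sigma> (x ^ n) = \<sigma> 1"
      by (simp add: \<sigma>_power \<sigma>_1)
    then have "x ^ n = 1"
      using inj_onD[OF inj] x(1) subfield_power[OF K x(1)] subfield_1[OF K] by blast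
    then show "z \<in> \<sigma> ` R"
      using x by (auto simp: R_def)
  qed
  then have "card {z::complex. z ^ n = 1} \<le> card (\<sigma> ` R)"
    using \<open>finite R\<close> by (intro card_mono finite_imageI)
  also have "\<dots> \<le> card R"
    using \<open>finite R\<close> by (rule card_image_le)
  finally show ?thesis
    using card_roots_unity_eq[of n] n by (simp add: R_def)
qed

lemma roots_of_unity_subfield:
  fixes K :: "'a::field set"
  assumes K: "subfield_of K" and "complex_subfield_with_roots_of_unity K" and n: "n \<ge> 1"
  shows "{z. z ^ n = 1} \<subseteq> K" and "card {z::'a. z ^ n = 1} = n"
proof -
  let ?R = "{x \<in> K. x ^ n = 1}"
  have R_sub: "?R \<subseteq> {z. z ^ n = 1}"
    by auto
  have "n \<le> card ?R"
    using card_roots_of_unity_subfield_ge[OF assms] .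
  moreover have "card {z::'a. z ^ n = 1} \<le> n"
    using finite_roots_of_unity(2)[OF n] .
  ultimately have "?R = {z. z ^ n = 1}"
    using card_seteq[OF finite_roots_of_unity(1)[OF n] R_sub] by linarith
  then show "{z. z ^ n = 1} \<subseteq> K" and "card {z::'a. z ^ n = 1} = n"
    using \<open>n \<le> card ?R\<close> \<open>card {z::'a. z ^ n = 1} \<le> n\<close> by auto
qed

lemma nontrivial_root_of_unity_subfield:
  fixes K :: "'a::field set"
  assumes "subfield_of K" and "complex_subfield_with_roots_of_unity K" and "n \<ge> 2"
  shows "\<exists>\<zeta>\<in>K. \<zeta> ^ n = 1 \<and> \<zeta> \<noteq> 1"
proof -
  have "\<not> {z::'a. z ^ n = 1} \<subseteq> {1}"
  proof
    assume "{z::'a. z ^ n = 1} \<subseteq> {1}"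
    then have "card {z::'a. z ^ n = 1} \<le> 1"
      using card_mono[of "{1}" "{z::'a. z ^ n = 1}"] by simp
    then show False
      using roots_of_unity_subfield(2)[OF assms(1,2), of n] assms(3) by simp
  qed
  then show ?thesis
    using roots_of_unity_subfield(1)[OF assms(1,2), of n] assms(3) by auto
qed

section \<open>Kummer extensions of prime degree\<close>

definition ring_adjoin :: "'a::field set \<Rightarrow> 'a \<Rightarrow> 'a set" where
  "ring_adjoin F \<theta> = {poly f \<theta> | f. poly_over F f}"

lemma ring_adjoinI: "poly_over F f \<Longrightarrow> poly f \<theta> \<in> ring_adjoin F \<theta>"
  by (auto simp: ring_adjoin_def)

context
  fixes F :: "'a::field set"
  assumes F: "subfield_of F"
begin

lemma subset_ring_adjoin: "F \<subseteq> ring_adjoin F \<theta>"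
  using ring_adjoinI[OF poly_over_const[OF F]] by fastforce

lemma ring_adjoin_self: "\<theta> \<in> ring_adjoin F \<theta>"
  using ring_adjoinI[OF poly_over_monom[OF F subfield_1[OF F]], of 1 \<theta>] by (simp add: poly_monom)

lemma ring_adjoin_add:
  assumes "x \<in> ring_adjoin F \<theta>" "y \<in> ring_adjoin F \<theta>"
  shows "x + y \<in> ring_adjoin F \<theta>"
proof -
  obtain f g where "poly_over F f" "poly_over F g" "x = poly f \<theta>" "y = poly g \<theta>"
    using assms by (auto simp: ring_adjoin_def)
  then show ?thesis
    using ring_adjoinI[OF poly_over_add[OF F], of f g \<theta>] by simp
qed

lemma ring_adjoin_mult:
  assumes "x \<in> ring_adjoin F \<theta>" "y \<in> ring_adjoin F \<theta>"
  shows "x * y \<in> ring_adjoin F \<theta>"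
proof -
  obtain f g where "poly_over F f" "poly_over F g" "x = poly f \<theta>" "y = poly g \<theta>"
    using assms by (auto simp: ring_adjoin_def)
  then show ?thesis
    using ring_adjoinI[OF poly_over_mult[OF F], of f g \<theta>] by simp
qed

lemma ring_adjoin_uminus:
  assumes "x \<in> ring_adjoin F \<theta>"
  shows "- x \<in> ring_adjoin F \<theta>"
proof -
  obtain f where "poly_over F f" "x = poly f \<theta>"
    using assms by (auto simp: ring_adjoin_def)
  then show ?thesis
    using ring_adjoinI[OF poly_over_diff[OF F poly_over_0[OF F]], of f \<theta>] by simp
qed

lemma ring_adjoin_prod: "(\<And>i. i \<in> S \<Longrightarrow> f i \<in> ring_adjoin F \<theta>) \<Longrightarrow> prod f S \<in> ring_adjoin F \<theta>"
  by (induction S rule: infinite_finite_induct)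
    (use subset_ring_adjoin subfield_1[OF F] in \<open>auto intro: ring_adjoin_mult\<close>)

end

locale prime_radical_extension =
  fixes F :: "'a::field set" and \<theta> \<zeta> :: 'a and p :: nat
  assumes subfield: "subfield_of F" and prime: "prime p"
    and zeta_in: "\<zeta> \<in> F" and zeta_root: "\<zeta> ^ p = 1" and zeta_ne_1: "\<zeta> \<noteq> 1"
    and theta_power_in: "\<theta> ^ p \<in> F" and theta_notin: "\<theta> \<notin> F"
begin

lemma p_gt_1: "1 < p"
  using prime prime_gt_1_nat by blast

lemma theta_ne_0: "\<theta> \<noteq> 0"
  using theta_notin subfield_0[OF subfield] by auto

lemma zeta_power_in: "\<zeta> ^ k \<in> F"
  using subfield_power[OF subfield zeta_in] .

lemma zeta_power_root: "(\<zeta> ^ k) ^ p = 1"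
proof -
  have "(\<zeta> ^ k) ^ p = (\<zeta> ^ p) ^ k"
    by (simp only: power_mult[symmetric] mult.commute)
  then show ?thesis
    by (simp add: zeta_root)
qed

lemma zeta_power_ne_1: "\<not> p dvd k \<Longrightarrow> \<zeta> ^ k \<noteq> 1"
  using prime_root_of_unity_power_eq_1_iff[OF prime zeta_root zeta_ne_1] by simp

lemma conjugate_power: "(\<zeta> ^ k * \<theta>) ^ p = \<theta> ^ p"
  by (simp add: power_mult_distrib zeta_power_root)

lemma conjugates_inj: "inj_on (\<lambda>j. \<zeta> ^ j * \<theta>) {..<p}"
  using prime_root_of_unity_inj[OF prime zeta_root zeta_ne_1 theta_ne_0] .

definition radical_poly :: "'a poly" where
  "radical_poly = monom 1 p + [:- (\<theta> ^ p):]"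

lemma poly_radical_poly: "poly radical_poly x = x ^ p - \<theta> ^ p"
  by (simp add: radical_poly_def poly_monom)

lemma poly_over_radical_poly: "poly_over F radical_poly"
  unfolding radical_poly_def using subfield theta_power_in
  by (intro poly_over_add poly_over_monom poly_over_const subfield_1 subfield_uminus)

lemma degree_radical_poly: "degree radical_poly = p"
  using p_gt_1 by (simp add: radical_poly_def degree_add_eq_left degree_monom_eq)

lemma radical_poly_ne_0: "radical_poly \<noteq> 0"
  using degree_radical_poly p_gt_1 by auto

lemma minimal_poly_over_conjugate_nonroot:
  assumes q: "minimal_poly_over F \<theta> q" "degree q < p" and k: "0 < k" "k < p"
  shows "poly q (\<zeta> ^ k * \<theta>) \<noteq> 0"
proof
  assume "poly q (\<zeta> ^ k * \<theta>) = 0"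
  then have scale: "poly q (\<zeta> ^ k * x) = (\<zeta> ^ k) ^ degree q * poly q x" for x
    using minimal_poly_over_scale[OF subfield q(1) zeta_power_in] by blast
  have "poly q ((\<zeta> ^ k) ^ j * \<theta>) = 0" for j
  proof (induction j)
    case 0
    then show ?case
      using q(1) by (simp add: minimal_poly_over_def)
  next
    case (Suc j)
    then show ?case
      using scale[of "(\<zeta> ^ k) ^ j * \<theta>"] by (simp add: mult.assoc)
  qed
  moreover have "\<not> p dvd k"
    using k by (auto dest: dvd_imp_le)
  ultimately have "card {..<p} \<le> degree q"
    using q(1) prime_root_of_unity_inj[OF prime zeta_power_root zeta_power_ne_1 theta_ne_0]
    by (intro card_le_degree_if_roots) (auto simp: minimal_poly_over_def)
  then show False
    using q(2) by simp
qed

text \<open>In other words, \<open>X\<^sup>p - \<theta>\<^sup>p\<close> is irreducible over \<open>F\<close>. A minimal polynomial \<open>q\<close>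
  of smaller degree divides \<open>X\<^sup>p - \<theta>\<^sup>p\<close>; none of the other roots \<open>\<zeta>\<^sup>k \<theta>\<close> is a root of
  \<open>q\<close>, so they are all roots of the cofactor, which forces \<open>q\<close> to be linear and \<open>\<theta> \<in> F\<close>.\<close>

lemma degree_ge_if_root:
  assumes "poly_over F f" "f \<noteq> 0" "poly f \<theta> = 0"
  shows "p \<le> degree f"
proof (rule ccontr)
  assume "\<not> p \<le> degree f"
  obtain q where q: "minimal_poly_over F \<theta> q" "degree q \<le> degree f"
    using minimal_poly_over_exists[OF assms] .
  then have "degree q < p"
    using \<open>\<not> p \<le> degree f\<close> by simp
  obtain s where s: "radical_poly = q * s"
    using minimal_poly_over_dvd[OF subfield q(1) poly_over_radical_poly]
    by (auto simp: poly_radical_poly)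
  have "s \<noteq> 0"
    using s radical_poly_ne_0 by auto
  have "poly s (\<zeta> ^ k * \<theta>) = 0" if "k \<in> {1..<p}" for k
    using that minimal_poly_over_conjugate_nonroot[OF q(1) \<open>degree q < p\<close>, of k]
      arg_cong[OF s, of "\<lambda>f. poly f (\<zeta> ^ k * \<theta>)"]
    by (simp add: poly_radical_poly conjugate_power)
  moreover have "inj_on (\<lambda>j. \<zeta> ^ j * \<theta>) {1..<p}"
    by (rule inj_on_subset[OF conjugates_inj]) auto
  ultimately have "card {1..<p} \<le> degree s"
    by (intro card_le_degree_if_roots[OF \<open>s \<noteq> 0\<close>])
  moreover have "degree q + degree s = p"
    using s \<open>s \<noteq> 0\<close> q(1) degree_radical_poly by (simp add: degree_mult_eq minimal_poly_over_def)
  ultimately have "degree q = 1"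
    using minimal_poly_over_degree_pos[OF q(1)] by simp
  then show False
    using minimal_poly_over_degree_1[OF subfield q(1)] theta_notin by blast
qed

lemma minimal_poly_over_radical_poly: "minimal_poly_over F \<theta> radical_poly"
  unfolding minimal_poly_over_def
proof (intro conjI allI impI)
  fix g
  assume "poly_over F g" "poly g \<theta> = 0" "degree g < degree radical_poly"
  then show "g = 0"
    using degree_ge_if_root[of g] degree_radical_poly by (cases "g = 0") auto
qed (simp_all add: poly_over_radical_poly radical_poly_ne_0 poly_radical_poly)

lemma conjugate_root:
  assumes "poly_over F f" "poly f \<theta> = 0"
  shows "poly f (\<zeta> ^ k * \<theta>) = 0"
proof -
  obtain s where "f = radical_poly * s"
    using minimal_poly_over_dvd[OF subfield minimal_poly_over_radical_poly assms] by blast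
  then show ?thesis
    by (simp add: poly_radical_poly conjugate_power)
qed

lemma root_if_conjugate_root:
  assumes "poly_over F f" "poly f (\<zeta> ^ k * \<theta>) = 0"
  shows "poly f \<theta> = 0"
proof -
  let ?g = "f \<circ>\<^sub>p [:0, \<zeta> ^ k:]"
  have g: "poly ?g x = poly f (\<zeta> ^ k * x)" for x
    by (simp add: poly_pcompose mult.commute)
  have "poly_over F ?g"
    using poly_over_pcompose_linear[OF subfield assms(1) zeta_power_in] .
  then have "poly f (\<zeta> ^ k * (\<zeta> ^ ((p - 1) * k) * \<theta>)) = 0"
    using conjugate_root[of ?g] assms(2) by (simp add: g)
  moreover have "k + (p - 1) * k = p * k"
    using p_gt_1 by (cases p) auto
  then have "\<zeta> ^ k * \<zeta> ^ ((p - 1) * k) = \<zeta> ^ (p * k)"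
    using power_add[of \<zeta> k "(p - 1) * k"] by simp
  then have unit: "\<zeta> ^ k * \<zeta> ^ ((p - 1) * k) = 1"
    by (simp add: power_mult zeta_root)
  ultimately show ?thesis
    by (simp only: mult.assoc[symmetric] unit mult_1_left)
qed

lemma poly_over_reduce:
  assumes "poly_over F f"
  obtains r where "poly_over F r" "degree r < p" "\<And>x. x ^ p = \<theta> ^ p \<Longrightarrow> poly f x = poly r x"
proof -
  obtain s r where "poly_over F r" "f = s * radical_poly + r"
    "r = 0 \<or> degree r < degree radical_poly"
    using poly_over_division[OF subfield poly_over_radical_poly radical_poly_ne_0 assms] by blast
  then show ?thesis
    using p_gt_1 degree_radical_poly by (intro that[of r]) (auto simp: poly_radical_poly)
qed

lemma ring_adjoinE:
  assumes "x \<in> ring_adjoin F \<theta>"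
  obtains r where "poly_over F r" "degree r < p" "x = poly r \<theta>"
proof -
  obtain f where "poly_over F f" "x = poly f \<theta>"
    using assms by (auto simp: ring_adjoin_def)
  moreover obtain r where "poly_over F r" "degree r < p" "poly f \<theta> = poly r \<theta>"
    using poly_over_reduce[OF \<open>poly_over F f\<close>] by metis
  ultimately show thesis
    using that by simp
qed

lemma coeff_eq_if_poly_scale_eq:
  assumes r: "poly_over F r" "degree r < p" and "\<omega> \<in> F" "\<eta> \<in> F"
    and eq: "poly r (\<omega> * \<theta>) = \<eta> * poly r \<theta>"
  shows "\<omega> ^ i * coeff r i = \<eta> * coeff r i"
proof -
  define g where "g = r \<circ>\<^sub>p [:0, \<omega>:] - smult \<eta> r"
  have "poly_over F g"
    unfolding g_def using subfield r(1) assms(3,4)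
    by (intro poly_over_diff poly_over_smult poly_over_pcompose_linear)
  moreover have "poly g \<theta> = 0"
    using eq by (simp add: g_def poly_pcompose mult.commute)
  moreover have "degree (r \<circ>\<^sub>p [:0, \<omega>:]) \<le> degree r"
    by (rule degree_le) (auto simp: coeff_pcompose_linear coeff_eq_0)
  then have "degree g < p"
    using r(2) by (simp add: g_def degree_diff_less)
  ultimately have "g = 0"
    using degree_ge_if_root[of g] by (cases "g = 0") auto
  then have "coeff (r \<circ>\<^sub>p [:0, \<omega>:]) i = coeff (smult \<eta> r) i"
    by (simp add: g_def)
  then show ?thesis
    by (simp only: coeff_pcompose_linear coeff_smult)
qed

lemma poly_in_if_conjugation_fixed:
  assumes r: "poly_over F r" "degree r < p" and fixed: "poly r (\<zeta> * \<theta>) = poly r \<theta>"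
  shows "poly r \<theta> \<in> F"
proof -
  have "coeff r i = 0" if "0 < i" for i
  proof (cases "i < p")
    case True
    then have "\<not> p dvd i"
      using that by (auto dest: dvd_imp_le)
    then have "\<zeta> ^ i \<noteq> 1"
      by (rule zeta_power_ne_1)
    moreover have "\<zeta> ^ i * coeff r i = 1 * coeff r i"
      using coeff_eq_if_poly_scale_eq[OF r zeta_in subfield_1[OF subfield]] fixed by simp
    ultimately show ?thesis
      by simp
  next
    case False
    then show ?thesis
      using r(2) by (simp add: coeff_eq_0)
  qed
  then have "degree r = 0"
    by (metis leading_coeff_0_iff degree_0 gr0I)
  then have "poly r \<theta> = coeff r 0"
    by (simp add: poly_altdef)
  then show ?thesis
    using r(1) by (simp add: poly_over_def)
qed

lemma dvd_if_theta_power_int_in: "\<theta> powi m \<in> F \<Longrightarrow> int p dvd m"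
  using power_int_in_subfield_coprime[OF subfield prime theta_ne_0 theta_power_in] theta_notin
  by blast

text \<open>The norm \<open>\<Prod>\<^sub>k f(\<zeta>\<^sup>k \<theta>)\<close> of \<open>y = f(\<theta>)\<close> is unchanged by \<open>\<theta> \<mapsto> \<zeta> \<theta>\<close> and therefore lies
  in \<open>F\<close>; dividing it by \<open>y\<close> leaves a product of conjugates.\<close>

lemma ring_adjoin_inverse:
  assumes y: "y \<in> ring_adjoin F \<theta>" "y \<noteq> 0"
  shows "inverse y \<in> ring_adjoin F \<theta>"
proof -
  obtain f where f: "poly_over F f" "y = poly f \<theta>"
    using y(1) by (auto simp: ring_adjoin_def)
  define Y where "Y k = poly f (\<zeta> ^ k * \<theta>)" for k
  have Y_in: "Y k \<in> ring_adjoin F \<theta>" for k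
    using ring_adjoinI[OF poly_over_pcompose_linear[OF subfield f(1) zeta_power_in], of k \<theta>]
    by (simp add: Y_def poly_pcompose mult.commute)
  have Y_ne_0: "Y k \<noteq> 0" for k
    using root_if_conjugate_root[OF f(1), of k] y(2) f(2) by (auto simp: Y_def)
  define P where "P = (\<Prod>k<p. f \<circ>\<^sub>p [:0, \<zeta> ^ k:])"
  have "poly_over F P"
    unfolding P_def using f(1)
    by (intro poly_over_prod[OF subfield] poly_over_pcompose_linear[OF subfield _ zeta_power_in])
  then obtain R where R: "poly_over F R" "degree R < p" "\<And>x. x ^ p = \<theta> ^ p \<Longrightarrow> poly P x = poly R x"
    using poly_over_reduce by blast
  have poly_P: "poly P x = (\<Prod>k<p. poly f (\<zeta> ^ k * x))" for x
    by (simp add: P_def poly_prod poly_pcompose mult.commute)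
  have "poly P (\<zeta> * \<theta>) = (\<Prod>k<p. Y (Suc k))"
    by (simp add: poly_P Y_def mult_ac)
  also have "\<dots> = (\<Prod>k<p. Y k)"
    by (rule prod_lessThan_rotate) (simp add: Y_def zeta_root)
  finally have "poly P (\<zeta> * \<theta>) = poly P \<theta>"
    by (simp add: poly_P Y_def)
  then have "poly R (\<zeta> * \<theta>) = poly R \<theta>"
    using R(3) conjugate_power[of 1] by simp
  then have norm_in: "(\<Prod>k<p. Y k) \<in> F"
    using poly_in_if_conjugation_fixed[OF R(1,2)] R(3) by (simp add: poly_P Y_def)
  have "(\<Prod>k<p. Y k) = y * (\<Prod>k\<in>{..<p} - {0}. Y k)"
    using p_gt_1 f(2) by (simp add: prod.remove[of "{..<p}" 0] Y_def)
  then have "inverse y = (\<Prod>k\<in>{..<p} - {0}. Y k) * inverse (\<Prod>k<p. Y k)"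
    using y(2) Y_ne_0 by (simp add: field_simps)
  then show ?thesis
    using norm_in Y_in subset_ring_adjoin[OF subfield]
    by (auto intro!: ring_adjoin_mult[OF subfield] ring_adjoin_prod[OF subfield]
        subfield_inverse[OF subfield])
qed

lemma subfield_ring_adjoin: "subfield_of (ring_adjoin F \<theta>)"
proof -
  have zero: "0 \<in> ring_adjoin F \<theta>" and one: "1 \<in> ring_adjoin F \<theta>"
    using subset_ring_adjoin[OF subfield] subfield_0[OF subfield] subfield_1[OF subfield] by auto
  have inverse: "inverse x \<in> ring_adjoin F \<theta>" if "x \<in> ring_adjoin F \<theta>" for x
    using that zero ring_adjoin_inverse by (cases "x = 0") auto
  show ?thesis
    unfolding subfield_of_def
    by (intro conjI ballI zero one inverse ring_adjoin_add[OF subfield] ring_adjoin_mult[OF subfield]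
        ring_adjoin_uminus[OF subfield])
qed

lemma eq_monom_if_coeff_scale:
  assumes "degree r < p" "r \<noteq> 0" and scale: "\<And>i. \<zeta> ^ i * coeff r i = \<eta> * coeff r i"
  shows "r = monom (lead_coeff r) (degree r)"
proof -
  have \<eta>: "\<eta> = \<zeta> ^ degree r"
    using scale[of "degree r"] \<open>r \<noteq> 0\<close> by simp
  have "coeff r i = 0" if "i \<noteq> degree r" for i
  proof (cases "i < p")
    case True
    then have "\<zeta> ^ i \<noteq> \<zeta> ^ degree r"
      using inj_onD[OF conjugates_inj, of i "degree r"] that assms(1) by auto
    then show ?thesis
      using scale[of i] \<eta> by simp
  next
    case False
    then show ?thesis
      using assms(1) by (simp add: coeff_eq_0)
  qed
  then show ?thesis
    by (intro poly_eqI) (simp add: coeff_monom)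
qed

text \<open>If a power of \<open>x \<in> F[\<theta>]\<close> is a monomial \<open>\<kappa> \<theta>\<^sup>e\<close>, then so is \<open>x\<close>: evaluating at the
  conjugate \<open>\<zeta> \<theta>\<close> instead of \<open>\<theta>\<close> multiplies \<open>x\<close> by a root of unity \<open>\<eta>\<close>, and comparing
  coefficients leaves a single nonzero one.\<close>

lemma ring_adjoin_monomial_if_power:
  assumes roots: "\<And>z n. n \<ge> 1 \<Longrightarrow> z ^ n = 1 \<Longrightarrow> z \<in> F"
    and x: "x \<in> ring_adjoin F \<theta>" "x \<noteq> 0" and N: "N \<ge> 1"
    and \<kappa>: "\<kappa> \<in> F" and power: "x ^ N = \<kappa> * \<theta> powi e"
  obtains c j where "c \<in> F" "x = c * \<theta> ^ j"
proof -
  obtain r where r: "poly_over F r" "degree r < p" "x = poly r \<theta>"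
    using ring_adjoinE[OF x(1)] .
  define e' where "e' = nat (e mod int p)"
  define \<kappa>' where "\<kappa>' = \<kappa> * (\<theta> ^ p) powi (e div int p)"
  have xN: "x ^ N = \<kappa>' * \<theta> ^ e'"
    using power power_int_div_mod[OF theta_ne_0, of p e] p_gt_1 by (simp add: \<kappa>'_def e'_def ac_simps)
  have "\<kappa>' \<in> F"
    using \<kappa> theta_power_in
    by (simp add: \<kappa>'_def subfield_mult[OF subfield] subfield_power_int[OF subfield])
  have "poly (r ^ N - monom \<kappa>' e') \<theta> = 0"
    using xN r(3) by (simp add: poly_monom)
  then have "poly (r ^ N - monom \<kappa>' e') (\<zeta> ^ 1 * \<theta>) = 0"
    using \<open>\<kappa>' \<in> F\<close> r(1) subfield
    by (intro conjugate_root poly_over_diff poly_over_power poly_over_monom)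
  then have "poly r (\<zeta> * \<theta>) ^ N = \<zeta> ^ e' * x ^ N"
    using xN by (simp add: poly_monom power_mult_distrib ac_simps)
  moreover define \<eta> where "\<eta> = poly r (\<zeta> * \<theta>) / x"
  ultimately have "\<eta> ^ N = \<zeta> ^ e'"
    using x(2) by (simp add: power_divide)
  then have "\<eta> ^ (N * p) = 1"
    by (simp add: power_mult zeta_power_root)
  then have "\<eta> \<in> F"
    using N p_gt_1 by (intro roots[of "N * p"]) auto
  have "\<zeta> ^ i * coeff r i = \<eta> * coeff r i" for i
    using coeff_eq_if_poly_scale_eq[OF r(1,2) zeta_in \<open>\<eta> \<in> F\<close>] x(2) r(3) by (simp add: \<eta>_def)
  moreover have "r \<noteq> 0"
    using r(3) x(2) by auto
  ultimately have "r = monom (lead_coeff r) (degree r)"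
    using eq_monom_if_coeff_scale[OF r(2)] by blast
  then have "x = lead_coeff r * \<theta> ^ degree r"
    using r(3) by (metis poly_monom)
  then show thesis
    using that[of "lead_coeff r" "degree r"] r(1) by (simp add: poly_over_def)
qed

lemma power_eq_if_monomials_eq:
  assumes "c \<in> F" "c \<noteq> 0" "\<kappa> \<in> F" and eq: "c ^ N * \<theta> ^ m = \<kappa> * \<theta> powi i"
  shows "\<exists>t. c ^ N = \<kappa> * (\<theta> ^ p) powi t"
proof -
  have "\<theta> powi (int m - i) = \<kappa> / c ^ N"
    using eq \<open>c \<noteq> 0\<close> theta_ne_0 by (simp add: power_int_diff field_simps)
  then have "\<theta> powi (int m - i) \<in> F"
    using assms(1,3) by (simp add: subfield_divide[OF subfield] subfield_power[OF subfield])
  then have "int p dvd int m - i"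
    by (rule dvd_if_theta_power_int_in)
  then obtain t where t: "i - int m = int p * t"
    by (metis dvd_diff_commute dvdE)
  have "c ^ N = \<kappa> * \<theta> powi (i - int m)"
    using eq theta_ne_0 by (simp add: power_int_diff field_simps)
  also have "\<dots> = \<kappa> * (\<theta> ^ p) powi t"
    unfolding t by (simp add: power_int_mult)
  finally show ?thesis ..
qed

lemma root_closed_ring_adjoin:
  assumes K: "K \<subseteq> F" and roots: "\<And>z n. n \<ge> 1 \<Longrightarrow> z ^ n = 1 \<Longrightarrow> z \<in> K"
    and H: "mult_subgroup H" "H \<subseteq> F" "\<theta> ^ p \<in> H"
    and closed: "root_closed_in F ((K - {0}) * H)"
  shows "root_closed_in (ring_adjoin F \<theta>) ((K - {0}) * (H * range (power_int \<theta>)))"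
  unfolding root_closed_in_def
proof (intro ballI allI impI)
  fix x and N :: nat
  assume x: "x \<in> ring_adjoin F \<theta> - {0}" and N: "N \<ge> 1"
    and "x ^ N \<in> (K - {0}) * (H * range (power_int \<theta>))"
  then obtain k h i where k: "k \<in> K" "k \<noteq> 0" and h: "h \<in> H" and xN: "x ^ N = k * h * \<theta> powi i"
    by (auto elim!: set_times_elim simp: mult.assoc)
  have "k * h \<in> F"
    using k h K H(2) by (auto intro: subfield_mult[OF subfield])
  moreover have "\<And>z n. n \<ge> 1 \<Longrightarrow> z ^ n = 1 \<Longrightarrow> z \<in> F"
    using roots K by blast
  ultimately obtain c j where c: "c \<in> F" "x = c * \<theta> ^ j"
    using ring_adjoin_monomial_if_power[OF _ _ _ N _ xN] x by blast
  have "c \<noteq> 0"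
    using x c by auto
  have "c ^ N * \<theta> ^ (j * N) = k * h * \<theta> powi i"
    using xN c(2) by (simp add: power_mult_distrib power_mult)
  then obtain t where "c ^ N = k * h * (\<theta> ^ p) powi t"
    using power_eq_if_monomials_eq[OF c(1) \<open>c \<noteq> 0\<close> \<open>k * h \<in> F\<close>] by blast
  then have "c ^ N = k * (h * (\<theta> ^ p) powi t)"
    by (simp add: mult.assoc)
  moreover have "h * (\<theta> ^ p) powi t \<in> H"
    using h H(1,3) by (intro mult_subgroup_mult mult_subgroup_power_int)
  moreover have "k \<in> K - {0}"
    using k by simp
  ultimately have "c ^ N \<in> (K - {0}) * H"
    using set_times_intro by metis
  then have "c \<in> (K - {0}) * H"
    using closed c(1) \<open>c \<noteq> 0\<close> N unfolding root_closed_in_def by blast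
  then obtain k' h' where "k' \<in> K - {0}" "h' \<in> H" "c = k' * h'"
    by (auto elim!: set_times_elim)
  moreover have "x = k' * (h' * \<theta> powi int j)"
    using c(2) \<open>c = k' * h'\<close> by (simp add: mult.assoc)
  ultimately show "x \<in> (K - {0}) * (H * range (power_int \<theta>))"
    by (auto intro!: set_times_intro range_eqI[where x = "int j"])
qed

lemma kummer_admissible_ring_adjoin:
  assumes K: "K \<subseteq> F" and roots: "\<And>z n. n \<ge> 1 \<Longrightarrow> z ^ n = 1 \<Longrightarrow> z \<in> K"
    and H: "mult_subgroup H" "H \<subseteq> F" "\<theta> ^ p \<in> H"
    and closed: "root_closed_in F ((K - {0}) * H)"
  shows "kummer_admissible K (H * range (power_int \<theta>))"
proof -
  have E: "mult_subgroup (ring_adjoin F \<theta> - {0})"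
    using mult_subgroup_subfield_nonzero[OF subfield_ring_adjoin] .
  have "H \<subseteq> ring_adjoin F \<theta> - {0}"
    using H(2) mult_subgroup_nonzero[OF H(1)] subset_ring_adjoin[OF subfield, of \<theta>] by auto
  moreover have "range (power_int \<theta>) \<subseteq> ring_adjoin F \<theta> - {0}"
    using ring_adjoin_self[OF subfield] theta_ne_0 by (intro range_power_int_subset[OF E]) auto
  ultimately have "H * range (power_int \<theta>) \<subseteq> ring_adjoin F \<theta>"
    using mult_subgroup_times_subset[OF E] by blast
  moreover have "K \<subseteq> ring_adjoin F \<theta>"
    using K subset_ring_adjoin[OF subfield] by blast
  moreover have "root_closed_in (ring_adjoin F \<theta>) ((K - {0}) * (H * range (power_int \<theta>)))"
    by (intro root_closed_ring_adjoin[OF K _ H closed] roots)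
  ultimately show ?thesis
    unfolding kummer_admissible_def using subfield_ring_adjoin by blast
qed

end

section \<open>Adjoining roots\<close>

lemma kummer_admissible_adjoin_mem:
  assumes K: "subfield_of K" and H: "mult_subgroup H" and "kummer_admissible K H"
    and \<theta>: "\<theta> \<in> (K - {0}) * H"
  shows "kummer_admissible K (H * range (power_int \<theta>))"
proof -
  obtain F where F: "subfield_of F" "K \<subseteq> F" "H \<subseteq> F"
    and closed: "root_closed_in F ((K - {0}) * H)"
    using \<open>kummer_admissible K H\<close> by (auto simp: kummer_admissible_def)
  let ?S = "(K - {0}) * H"
  have S: "mult_subgroup ?S"
    using mult_subgroup_times[OF mult_subgroup_subfield_nonzero[OF K] H] .
  have "(K - {0}) * (H * range (power_int \<theta>)) = ?S * range (power_int \<theta>)"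
    by (simp add: mult.assoc)
  also have "\<dots> = ?S"
    using mult_subgroup_times_eq[OF S range_power_int_subset[OF S \<theta>] one_in_range_power_int] .
  finally have eq: "(K - {0}) * (H * range (power_int \<theta>)) = ?S" .
  have F': "mult_subgroup (F - {0})"
    using mult_subgroup_subfield_nonzero[OF F(1)] .
  have H': "H \<subseteq> F - {0}"
    using F(3) mult_subgroup_nonzero[OF H] by auto
  then have "?S \<subseteq> F - {0}"
    using F(2) by (intro mult_subgroup_times_subset[OF F']) auto
  then have "range (power_int \<theta>) \<subseteq> F - {0}"
    using range_power_int_subset[OF S \<theta>] by blast
  then have "H * range (power_int \<theta>) \<subseteq> F"
    using mult_subgroup_times_subset[OF F' H'] by blast
  then show ?thesis
    using F closed eq by (auto simp: kummer_admissible_def)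
qed

context
  fixes K :: "'a::field set"
  assumes K: "subfield_of K"
    and roots: "\<And>z n. n \<ge> 1 \<Longrightarrow> z ^ n = 1 \<Longrightarrow> z \<in> K"
    and prime_roots: "\<And>p. prime p \<Longrightarrow> \<exists>\<zeta>\<in>K. \<zeta> ^ p = 1 \<and> \<zeta> \<noteq> 1"
begin

lemma kummer_admissible_adjoin_prime_root:
  assumes H: "mult_subgroup H" and adm: "kummer_admissible K H"
    and p: "prime p" and \<theta>: "\<theta> \<noteq> 0" "\<theta> ^ p \<in> H"
  shows "kummer_admissible K (H * range (power_int \<theta>))"
proof (cases "\<theta> \<in> (K - {0}) * H")
  case True
  then show ?thesis
    by (rule kummer_admissible_adjoin_mem[OF K H adm])
next
  case False
  obtain F where F: "subfield_of F" "K \<subseteq> F" "H \<subseteq> F"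
    and closed: "root_closed_in F ((K - {0}) * H)"
    using adm by (auto simp: kummer_admissible_def)
  have "\<theta> \<notin> F"
  proof
    assume "\<theta> \<in> F"
    moreover have "\<theta> ^ p \<in> (K - {0}) * H"
      using set_times_intro[of 1 "K - {0}" "\<theta> ^ p" H] subfield_1[OF K] \<theta>(2) by simp
    ultimately have "\<theta> \<in> (K - {0}) * H"
      using closed \<theta>(1) prime_ge_1_nat[OF p] unfolding root_closed_in_def by blast
    with False show False ..
  qed
  obtain \<zeta> where \<zeta>: "\<zeta> \<in> K" "\<zeta> ^ p = 1" "\<zeta> \<noteq> 1"
    using prime_roots[OF p] by blast
  interpret prime_radical_extension F \<theta> \<zeta> p
    using F \<zeta> p \<theta>(2) \<open>\<theta> \<notin> F\<close> by unfold_locales auto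
  show ?thesis
    by (intro kummer_admissible_ring_adjoin[OF F(2) _ H F(3) \<theta>(2) closed] roots)
qed

lemma kummer_admissible_adjoin_root:
  assumes "m \<ge> 1" "mult_subgroup H" "kummer_admissible K H" "\<theta> \<noteq> 0" "\<theta> ^ m \<in> H"
  shows "kummer_admissible K (H * range (power_int \<theta>))"
  using assms(1-3,5)
proof (induction m arbitrary: H rule: less_induct)
  case (less m)
  show ?case
  proof (cases "m = 1")
    case True
    then have "H * range (power_int \<theta>) = H"
      using less.prems
      by (intro mult_subgroup_times_eq range_power_int_subset one_in_range_power_int) simp_all
    then show ?thesis
      using less.prems(3) by simp
  next
    case False
    then obtain q m' where q: "prime q" and m': "m = q * m'"
      using prime_factor_nat[of m] by (auto elim!: dvdE)
    have "m' \<ge> 1"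
      using less.prems(1) m' by (cases m') auto
    have "1 * m' < q * m'"
      using prime_gt_1_nat[OF q] \<open>m' \<ge> 1\<close> by (intro mult_strict_right_mono) auto
    then have "m' < m"
      using m' by simp
    let ?H' = "H * range (power_int (\<theta> ^ m'))"
    have "(\<theta> ^ m') ^ q \<in> H"
      using less.prems(4) m' by (simp add: power_mult[symmetric] mult.commute)
    then have "kummer_admissible K ?H'"
      using kummer_admissible_adjoin_prime_root[OF less.prems(2,3) q] assms(4) by simp
    moreover have "mult_subgroup ?H'"
      using mult_subgroup_times[OF less.prems(2) mult_subgroup_range_power_int] assms(4) by simp
    moreover have "\<theta> ^ m' \<in> range (power_int (\<theta> ^ m'))"
      by (rule range_eqI[of _ _ 1]) simp
    then have "\<theta> ^ m' \<in> ?H'"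
      using set_times_intro[OF mult_subgroup_1[OF less.prems(2)]] by fastforce
    ultimately have "kummer_admissible K (?H' * range (power_int \<theta>))"
      using less.IH[OF \<open>m' < m\<close> \<open>m' \<ge> 1\<close>] by blast
    then show ?thesis
      by (simp add: mult.assoc range_power_int_power_times[OF assms(4)])
  qed
qed

lemma kummer_admissible_times_mult_span:
  assumes H: "mult_subgroup H" "kummer_admissible K H" and "m \<ge> 1"
    and b: "\<And>i. i < r \<Longrightarrow> b i \<noteq> 0 \<and> b i ^ m \<in> H"
  shows "kummer_admissible K (H * mult_span b r)"
  using b
proof (induction r)
  case 0
  then show ?case
    using H mult_subgroup_times_eq[OF H(1), of "{1}"] mult_subgroup_1[OF H(1)] by (simp add: mult_span_0)
next
  case (Suc r)
  have span: "mult_subgroup (mult_span b r)"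
    using Suc.prems by (intro mult_subgroup_mult_span) auto
  then have "mult_subgroup (H * mult_span b r)"
    by (intro mult_subgroup_times H(1))
  moreover have "b r ^ m \<in> H * mult_span b r"
    using set_times_intro[OF _ mult_subgroup_1[OF span], of "b r ^ m" H] Suc.prems[of r] by simp
  ultimately have "kummer_admissible K ((H * mult_span b r) * range (power_int (b r)))"
    using kummer_admissible_adjoin_root[OF \<open>m \<ge> 1\<close>] Suc by auto
  then show ?case
    by (simp add: mult_span_Suc mult.assoc)
qed

end

section \<open>Exponent matrices\<close>

lemma int_matrix_left_inverse_multiple:
  fixes M :: "nat \<Rightarrow> nat \<Rightarrow> int"
  assumes injective: "\<And>w. (\<forall>k<r. (\<Sum>j<r. w j * M j k) = 0) \<Longrightarrow> (\<forall>j<r. w j = 0)"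
  shows "\<exists>D W. D \<noteq> 0 \<and>
    (\<forall>i<r. \<forall>k<r. (\<Sum>j<r. W i j * M j k) = (if i = k then D else 0))"
proof -
  define A where "A = mat r r (\<lambda>(k, j). M j k)"
  have A: "A \<in> carrier_mat r r"
    by (simp add: A_def)
  have "det A \<noteq> 0"
  proof
    assume "det A = 0"
    then obtain v where v: "v \<in> carrier_vec r" "v \<noteq> 0\<^sub>v r" "A *\<^sub>v v = 0\<^sub>v r"
      using det_0_iff_vec_prod_zero[OF A] by blast
    have "(\<Sum>j<r. v $ j * M j k) = 0" if "k < r" for k
    proof -
      have "(A *\<^sub>v v) $ k = (\<Sum>j<r. M j k * v $ j)"
        using that v(1) by (simp add: A_def mult_mat_vec_def scalar_prod_def atLeast0LessThan row_def)
      then show ?thesis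
        using v(3) that by (simp add: mult.commute)
    qed
    then have "v = 0\<^sub>v r"
      using injective[of "\<lambda>j. v $ j"] v(1) by (intro eq_vecI) auto
    then show False
      using v(2) by simp
  qed
  moreover have "(\<Sum>j<r. adj_mat A $$ (j, i) * M j k) = (if i = k then det A else 0)"
    if "i < r" "k < r" for i k
  proof -
    have "(A * adj_mat A) $$ (k, i) = (\<Sum>j<r. M j k * adj_mat A $$ (j, i))"
      using that adj_mat(1)[OF A] A
      by (simp add: A_def times_mat_def scalar_prod_def atLeast0LessThan row_def col_def)
    moreover have "(A * adj_mat A) $$ (k, i) = (if i = k then det A else 0)"
      using adj_mat(2)[OF A] that by auto
    ultimately show ?thesis
      by (simp add: mult.commute)
  qed
  ultimately show ?thesis
    by (intro exI[of _ "det A"] exI[of _ "\<lambda>i j. adj_mat A $$ (j, i)"]) blast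
qed

lemma sum_left_inverse:
  fixes W M :: "nat \<Rightarrow> nat \<Rightarrow> 'a::comm_ring_1"
  assumes WM: "\<forall>i<r. \<forall>k<r. (\<Sum>j<r. W i j * M j k) = (if i = k then D else 0)" and "k < r"
  shows "(\<Sum>j<r. (\<Sum>i<r. n i * W i j) * M j k) = n k * D"
proof -
  have "(\<Sum>j<r. (\<Sum>i<r. n i * W i j) * M j k) = (\<Sum>j<r. \<Sum>i<r. n i * W i j * M j k)"
    by (simp add: sum_distrib_right)
  also have "\<dots> = (\<Sum>i<r. \<Sum>j<r. n i * W i j * M j k)"
    by (rule sum.swap)
  also have "\<dots> = (\<Sum>i<r. n i * (\<Sum>j<r. W i j * M j k))"
    by (simp add: sum_distrib_left mult.assoc)
  also have "\<dots> = (\<Sum>i<r. if i = k then n i * D else 0)"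
    using WM \<open>k < r\<close> by (intro sum.cong) auto
  finally show ?thesis
    using \<open>k < r\<close> by simp
qed

lemma prod_power_int: "(\<Prod>i\<in>S. f i) powi w = (\<Prod>i\<in>S. f i powi w)"
  for f :: "nat \<Rightarrow> 'a::field"
  by (induction S rule: infinite_finite_induct) (auto simp: power_int_mult_distrib)

lemma power_int_sum: "x \<noteq> 0 \<Longrightarrow> x powi (\<Sum>j\<in>S. e j) = (\<Prod>j\<in>S. x powi e j)"
  for x :: "'a::field"
  by (induction S rule: infinite_finite_induct) (auto simp: power_int_add)

lemma prod_power_int_compose:
  fixes b :: "nat \<Rightarrow> 'a::field"
  assumes "\<And>i. i < r \<Longrightarrow> b i \<noteq> 0"
  shows "(\<Prod>j<s. (\<Prod>i<r. b i powi M j i) powi w j) = (\<Prod>i<r. b i powi (\<Sum>j<s. w j * M j i))"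
proof -
  have "(\<Prod>j<s. (\<Prod>i<r. b i powi M j i) powi w j) = (\<Prod>j<s. \<Prod>i<r. b i powi (M j i * w j))"
    by (simp add: prod_power_int power_int_mult)
  also have "\<dots> = (\<Prod>i<r. \<Prod>j<s. b i powi (M j i * w j))"
    by (rule prod.swap)
  also have "\<dots> = (\<Prod>i<r. b i powi (\<Sum>j<s. w j * M j i))"
    using assms by (intro prod.cong refl) (simp add: power_int_sum mult.commute)
  finally show ?thesis .
qed

text \<open>Writing \<open>a\<^sub>j = \<Prod>\<^sub>i b\<^sub>i\<^bsup>M\<^sub>j\<^sub>i\<^esup>\<close>, independence of the \<open>a\<^sub>j\<close> makes the exponent matrix \<open>M\<close>
  nonsingular; its adjugate \<open>W\<close> with \<open>W M = D I\<close> expresses \<open>D\<close>-th powers of elements of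
  \<open>\<langle>b\<rangle>\<close> in terms of the \<open>a\<^sub>j\<close>.\<close>

lemma mult_span_exponent:
  assumes a: "mult_indep a r" and b: "\<And>i. i < r \<Longrightarrow> b i \<noteq> 0"
    and sub: "mult_span a r \<subseteq> mult_span b r"
  shows "\<exists>D W. D \<noteq> 0 \<and>
    (\<forall>n. (\<Prod>j<r. a j powi (\<Sum>i<r. n i * W i j)) = (\<Prod>k<r. b k powi n k) powi D) \<and>
    (\<forall>n. (\<forall>j<r. (\<Sum>i<r. n i * W i j) = 0) \<longrightarrow> (\<forall>i<r. n i = 0))"
proof -
  have "\<exists>n. a j = (\<Prod>i<r. b i powi n i)" if "j < r" for j
    using sub mult_span_generator[OF that, of a] unfolding mult_span_def by blast
  then obtain M where M: "\<And>j. j < r \<Longrightarrow> a j = (\<Prod>i<r. b i powi M j i)"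
    by metis
  have a_powers: "(\<Prod>j<r. a j powi w j) = (\<Prod>i<r. b i powi (\<Sum>j<r. w j * M j i))" for w
  proof -
    have "(\<Prod>j<r. a j powi w j) = (\<Prod>j<r. (\<Prod>i<r. b i powi M j i) powi w j)"
      using M by (intro prod.cong) auto
    then show ?thesis
      using prod_power_int_compose[OF b] by simp
  qed
  have "\<forall>j<r. w j = 0" if "\<forall>k<r. (\<Sum>j<r. w j * M j k) = 0" for w
    using a that unfolding mult_indep_def by (simp add: a_powers)
  then obtain D W where D: "D \<noteq> 0"
    and WM: "\<forall>i<r. \<forall>k<r. (\<Sum>j<r. W i j * M j k) = (if i = k then D else 0)"
    using int_matrix_left_inverse_multiple by blast
  have exponent: "(\<Sum>j<r. (\<Sum>i<r. n i * W i j) * M j k) = n k * D" if "k < r" for n k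
    using sum_left_inverse[OF WM that] .
  have "(\<Prod>j<r. a j powi (\<Sum>i<r. n i * W i j)) = (\<Prod>k<r. b k powi n k) powi D" for n
    by (simp add: a_powers exponent prod_power_int power_int_mult)
  moreover have "\<forall>i<r. n i = 0" if "\<forall>j<r. (\<Sum>i<r. n i * W i j) = 0" for n
    using exponent[of _ n] that D by simp
  ultimately show ?thesis
    using D by blast
qed

lemma mult_indep_if_mult_span_subset:
  assumes "mult_indep a r" "\<And>i. i < r \<Longrightarrow> b i \<noteq> 0" "mult_span a r \<subseteq> mult_span b r"
  shows "mult_indep b r"
proof -
  obtain D W where
    powers: "\<forall>n. (\<Prod>j<r. a j powi (\<Sum>i<r. n i * W i j)) = (\<Prod>k<r. b k powi n k) powi D"
    and W: "\<forall>n. (\<forall>j<r. (\<Sum>i<r. n i * W i j) = 0) \<longrightarrow> (\<forall>i<r. n i = 0)"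
    using mult_span_exponent[OF assms] by blast
  show ?thesis
    unfolding mult_indep_def
  proof (rule allI, rule impI)
    fix n :: "nat \<Rightarrow> int"
    assume "(\<Prod>i<r. b i powi n i) = 1"
    then have "(\<Prod>j<r. a j powi (\<Sum>i<r. n i * W i j)) = 1"
      by (simp add: powers)
    then have "\<forall>j<r. (\<Sum>i<r. n i * W i j) = 0"
      using assms(1) unfolding mult_indep_def by (elim allE[where x = "\<lambda>j. \<Sum>i<r. n i * W i j"]) simp
    then show "\<forall>i<r. n i = 0"
      using W by blast
  qed
qed

lemma mult_span_power_subset:
  assumes "mult_indep a r" "\<And>i. i < r \<Longrightarrow> a i \<noteq> 0" "\<And>i. i < r \<Longrightarrow> b i \<noteq> 0"
    and "mult_span a r \<subseteq> mult_span b r"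
  shows "\<exists>m\<ge>1. \<forall>y\<in>mult_span b r. y ^ m \<in> mult_span a r"
proof -
  obtain D W where D: "D \<noteq> 0"
    and powers: "\<forall>n. (\<Prod>j<r. a j powi (\<Sum>i<r. n i * W i j)) = (\<Prod>k<r. b k powi n k) powi D"
    using mult_span_exponent[OF assms(1,3,4)] by blast
  have A: "mult_subgroup (mult_span a r)"
    using assms(2) by (rule mult_subgroup_mult_span)
  have "y ^ nat \<bar>D\<bar> \<in> mult_span a r" if y: "y \<in> mult_span b r" for y
  proof -
    obtain n where "y = (\<Prod>k<r. b k powi n k)"
      using y by (auto simp: mult_span_def)
    then have "y powi D = (\<Prod>j<r. a j powi (\<Sum>i<r. n i * W i j))"
      using powers by simp
    then have yD: "y powi D \<in> mult_span a r"
      using mult_spanI[where c = a and n = "\<lambda>j. \<Sum>i<r. n i * W i j"] by simp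
    have "y ^ nat \<bar>D\<bar> = y powi \<bar>D\<bar>"
      using power_int_of_nat[of y "nat \<bar>D\<bar>"] by simp
    then show ?thesis
      using yD mult_subgroup_inverse[OF A yD] by (cases "D > 0") (simp_all add: power_int_minus)
  qed
  moreover have "nat \<bar>D\<bar> \<ge> 1"
    using D by simp
  ultimately show ?thesis
    by blast
qed

lemma mult_indep_root_of_unity:
  assumes indep: "mult_indep c r" and z: "z \<in> mult_span c r" "n \<ge> 1" "z ^ n = 1"
  shows "z = 1"
proof -
  obtain k where k: "z = (\<Prod>i<r. c i powi k i)"
    using z(1) by (auto simp: mult_span_def)
  have "z ^ n = (\<Prod>i<r. (c i powi k i) ^ n)"
    by (simp add: k prod_power_distrib)
  also have "\<dots> = (\<Prod>i<r. c i powi (k i * int n))"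
    by (simp add: power_int_mult)
  finally have "(\<Prod>i<r. c i powi (k i * int n)) = z ^ n"
    by simp
  then have "\<forall>i<r. k i * int n = 0"
    using indep z(3) unfolding mult_indep_def by (elim allE[where x = "\<lambda>i. k i * int n"]) simp
  then show ?thesis
    using z(2) k by simp
qed

section \<open>Purity\<close>

lemma subfield_inter_subset_if_pure:
  assumes pure: "pure_in A K" and B: "mult_subgroup B" "A \<subseteq> B"
    and m: "m \<ge> 1" "\<And>y. y \<in> B \<Longrightarrow> y ^ m \<in> A"
    and torsion_free: "\<And>z. z \<in> B \<Longrightarrow> z ^ m = 1 \<Longrightarrow> z = 1"
  shows "K \<inter> B \<subseteq> A"
proof
  fix c
  assume c: "c \<in> K \<inter> B"
  then have "c \<noteq> 0"
    using mult_subgroup_nonzero[OF B(1)] by blast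
  have "c ^ m \<in> A"
    using m(2) c by blast
  moreover have "\<exists>x\<in>K - {0}. x ^ m = c ^ m"
    using c \<open>c \<noteq> 0\<close> by blast
  ultimately obtain y where y: "y \<in> A" "y ^ m = c ^ m"
    using pure m(1) unfolding pure_in_def by blast
  then have "y \<noteq> 0"
    using B mult_subgroup_nonzero by blast
  then have "(c / y) ^ m = 1"
    using y(2) \<open>c \<noteq> 0\<close> by (simp add: power_divide)
  moreover have "c / y \<in> B"
    using c y(1) B by (blast intro: mult_subgroup_divide)
  ultimately have "c / y = 1"
    using torsion_free by blast
  then show "c \<in> A"
    using y(1) \<open>y \<noteq> 0\<close> by simp
qed

lemma pure_in_if_root_closed:
  assumes K: "subfield_of K" and pure: "pure_in A K"
    and B: "mult_subgroup B" "A \<subseteq> B" "K \<inter> B \<subseteq> A"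
    and "E \<subseteq> F" and closed: "root_closed_in F ((K - {0}) * B)"
  shows "pure_in B E"
  unfolding pure_in_def
proof (intro ballI allI impI)
  fix h m
  assume h: "h \<in> B" and m: "m \<ge> 1" and "\<exists>x\<in>E - {0}. x ^ m = h"
  then obtain x where x: "x \<in> F - {0}" "x ^ m = h"
    using \<open>E \<subseteq> F\<close> by blast
  have "h \<in> (K - {0}) * B"
    using set_times_intro[of 1 "K - {0}" h B] subfield_1[OF K] h by simp
  then have "x \<in> (K - {0}) * B"
    using closed x m unfolding root_closed_in_def by blast
  then obtain k y where k: "k \<in> K" "k \<noteq> 0" and y: "y \<in> B" and "x = k * y"
    by (auto elim!: set_times_elim)
  have "y \<noteq> 0"
    using y B(1) mult_subgroup_nonzero by blast
  then have km: "k ^ m = h / y ^ m"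
    using x(2) \<open>x = k * y\<close> by (simp add: power_mult_distrib eq_divide_eq)
  moreover have "h / y ^ m \<in> B"
    using B(1) h y by (intro mult_subgroup_divide mult_subgroup_power)
  ultimately have "k ^ m \<in> B"
    by simp
  then have "k ^ m \<in> A"
    using B(3) subfield_power[OF K k(1), of m] by blast
  moreover have "\<exists>x\<in>K - {0}. x ^ m = k ^ m"
    using k by blast
  ultimately obtain y' where y': "y' \<in> A" "y' ^ m = k ^ m"
    using pure m unfolding pure_in_def by blast
  have "(y * y') ^ m = h"
    using y' km \<open>y \<noteq> 0\<close> by (simp add: power_mult_distrib)
  moreover have "y * y' \<in> B"
    using y y'(1) B by (blast intro: mult_subgroup_mult)
  ultimately show "\<exists>y\<in>B. y ^ m = h"
    by blast
qed

lemma subfield_inter_mult_span_subset: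
  assumes a: "simple_in K a r" and b: "\<And>i. i < r \<Longrightarrow> b i \<noteq> 0"
    and sub: "mult_span a r \<subseteq> mult_span b r"
  shows "K \<inter> mult_span b r \<subseteq> mult_span a r"
proof -
  have a': "\<And>i. i < r \<Longrightarrow> a i \<noteq> 0" "mult_indep a r" "pure_in (mult_span a r) K"
    using a by (auto simp: simple_in_def)
  obtain m where m: "m \<ge> 1" "\<And>y. y \<in> mult_span b r \<Longrightarrow> y ^ m \<in> mult_span a r"
    using mult_span_power_subset[OF a'(2,1) b sub] by blast
  show ?thesis
  proof (rule subfield_inter_subset_if_pure[OF a'(3) mult_subgroup_mult_span[OF b] sub m])
    show "z = 1" if "z \<in> mult_span b r" "z ^ m = 1" for z
      using mult_indep_root_of_unity[OF mult_indep_if_mult_span_subset[OF a'(2) b sub]] that m(1)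
      by blast
  qed
qed

lemma kummer_admissible_mult_span_superset:
  assumes K: "subfield_of K" "complex_subfield_with_roots_of_unity K"
    and a: "simple_in K a r" and b: "\<And>i. i < r \<Longrightarrow> b i \<noteq> 0"
    and sub: "mult_span a r \<subseteq> mult_span b r"
  shows "kummer_admissible K (mult_span b r)"
proof -
  define A where "A = mult_span a r"
  have a': "\<And>i. i < r \<Longrightarrow> a i \<in> K - {0}" "mult_indep a r"
    using a by (auto simp: simple_in_def)
  have A: "mult_subgroup A" "A \<subseteq> K - {0}"
    using a'(1) mult_span_subset[OF mult_subgroup_subfield_nonzero[OF K(1)]]
    by (auto simp: A_def intro: mult_subgroup_mult_span)
  obtain m where m: "m \<ge> 1" "\<And>y. y \<in> mult_span b r \<Longrightarrow> y ^ m \<in> A"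
    using mult_span_power_subset[OF a'(2) _ b sub] a'(1) unfolding A_def by blast
  have "kummer_admissible K (A * mult_span b r)"
  proof (rule kummer_admissible_times_mult_span[OF K(1) _ _ A(1) _ m(1)])
    show "z \<in> K" if "1 \<le> n" "z ^ n = 1" for z and n :: nat
      using roots_of_unity_subfield(1)[OF K that(1)] that(2) by blast
    show "\<exists>\<zeta>\<in>K. \<zeta> ^ p = 1 \<and> \<zeta> \<noteq> 1" if "prime p" for p
      using nontrivial_root_of_unity_subfield[OF K prime_ge_2_nat[OF that]] .
    show "kummer_admissible K A"
      using A by (intro kummer_admissible_subfield[OF K(1)]) auto
    show "b i \<noteq> 0 \<and> b i ^ m \<in> A" if "i < r" for i
      using that b m(2) mult_span_generator[of i r b] by blast
  qed
  moreover have "A * mult_span b r = mult_span b r"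
    using mult_subgroup_times_eq[OF mult_subgroup_mult_span[OF b] _ mult_subgroup_1[OF A(1)]] sub
    by (simp add: A_def mult.commute)
  ultimately show ?thesis
    by simp
qed

theorem lemma2p16:
  fixes K :: "'a::field set" and a b :: "nat \<Rightarrow> 'a" and r :: nat
  assumes "subfield_of K"
    and "complex_subfield_with_roots_of_unity K"
    and "simple_in K a r"
    and "\<forall>i<r. b i \<noteq> 0"
    and "mult_span a r \<subseteq> mult_span b r"
  shows "simple_in (adjoin K b r) b r"
proof -
  have a: "mult_indep a r" "pure_in (mult_span a r) K"
    using assms(3) by (auto simp: simple_in_def)
  have b: "\<And>i. i < r \<Longrightarrow> b i \<noteq> 0"
    using assms(4) by blast
  obtain F where F: "subfield_of F" "K \<subseteq> F" "mult_span b r \<subseteq> F"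
    and closed: "root_closed_in F ((K - {0}) * mult_span b r)"
    using kummer_admissible_mult_span_superset[OF assms(1-3) b assms(5)]
    by (auto simp: kummer_admissible_def)
  have "b ` {..<r} \<subseteq> F"
    using F(3) mult_span_generator[of _ r b] by blast
  then have "adjoin K b r \<subseteq> F"
    unfolding adjoin_def using F(1,2) by blast
  then have "pure_in (mult_span b r) (adjoin K b r)"
    using pure_in_if_root_closed[OF assms(1) a(2) mult_subgroup_mult_span[OF b] assms(5)
        subfield_inter_mult_span_subset[OF assms(3) b assms(5)] _ closed]
    by blast
  moreover have "\<forall>i<r. b i \<in> adjoin K b r - {0}"
    using b by (auto simp: adjoin_def)
  ultimately show ?thesis
    using mult_indep_if_mult_span_subset[OF a(1) b assms(5)] by (simp add: simple_in_def)
qed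

end
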